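(* Let $\mathbb{H}$ be a finite-dimensional complex Hilbert space with $\dim\mathbb{H}\ge2$, let $|X\rangle\in\mathbb{H}^{\otimes3}$ be a known unit vector, let $c'_1,c'_2>0$, and let $\alpha,\beta$ be nonzero complex numbers with $|\alpha|^2+|\beta|^2=1$, $|\mu\rangle=\alpha|0\rangle+\beta|1\rangle\in\mathbb{C}^2$. Then there exists a probabilistic quantum transformation $\mathcal{F}'$ from $\mathbb{C}^2\otimes\mathbb{H}^{\otimes2}\otimes\mathbb{H}^{\otimes2}$ to $\mathbb{H}$, independent of $\alpha,\beta,\psi,\phi$, such that for all unit vectors $|\psi\rangle,|\phi\rangle\in\mathbb{H}$ satisfying $$|\langle X|(|\psi\rangle|\psi\rangle|\phi\rangle)|^2=c'_1,\qquad |\langle X|(|\phi\rangle|\phi\rangle|\psi\rangle)|^2=c'_2,$$ one has $\mathcal{F}'(\rho_\mu\otimes\rho_\psi^{\otimes2}\otimes\rho_\phi^{\otimes2})=\rho_{\varphi'}$ with $$|\varphi'\rangle\propto\alpha e^{i\theta_3}|\psi\rangle+\beta e^{i\theta_4}|\phi\rangle,\quad e^{i\theta_3}=\frac{\langle X|(|\phi\rangle|\phi\rangle|\psi\rangle)}{|\langle X|(|\phi\rangle|\phi\rangle|\psi\rangle)|},\quad e^{i\theta_4}=\frac{\langle X|(|\psi\rangle|\psi\rangle|\phi\rangle)}{|\langle X|(|\psi\rangle|\psi\rangle|\phi\rangle)|}$$ (the superposition assumed nonzero).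
   Context: For a unit vector $|\psi\rangle$, $\rho_\psi=|\psi\rangle\langle\psi|$; $|\varphi\rangle\propto|\chi\rangle$ means $|\varphi\rangle$ is the normalization of $|\chi\rangle$ up to a global phase. A probabilistic quantum transformation from $\mathbb{H}_1$ to $\mathbb{H}_2$ is a completely positive, trace-non-increasing linear map from operators on $\mathbb{H}_1$ to operators on $\mathbb{H}_2$; $\mathcal{F}(\rho)=\sigma$ for pure states means $\mathcal{F}(\rho)=p\sigma$ for some $p>0$. *)

theory Defs
  imports Complex_Main
begin

text \<open>Finite-dimensional complex Hilbert spaces are modelled as C^n. A vector in C^n is a
function nat => complex (only entries with index < n matter), an operator on C^n is a
function nat => nat => complex (only entries with indices < n matter).
Tensor products use the Kronecker convention: index of (i,j) in C^n (x) C^m is i*m+j.\<close>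

definition cinner :: "nat \<Rightarrow> (nat \<Rightarrow> complex) \<Rightarrow> (nat \<Rightarrow> complex) \<Rightarrow> complex" where
  "cinner n u v = (\<Sum>i<n. cnj (u i) * v i)"

definition vnorm :: "nat \<Rightarrow> (nat \<Rightarrow> complex) \<Rightarrow> real" where
  "vnorm n v = sqrt (Re (cinner n v v))"

definition unit_vec :: "nat \<Rightarrow> (nat \<Rightarrow> complex) \<Rightarrow> bool" where
  "unit_vec n v \<longleftrightarrow> vnorm n v = 1"

definition tensor_vec :: "nat \<Rightarrow> (nat \<Rightarrow> complex) \<Rightarrow> (nat \<Rightarrow> complex) \<Rightarrow> (nat \<Rightarrow> complex)" where
  "tensor_vec m v w = (\<lambda>k. v (k div m) * w (k mod m))"

definition tensor_op :: "nat \<Rightarrow> (nat \<Rightarrow> nat \<Rightarrow> complex) \<Rightarrow> (nat \<Rightarrow> nat \<Rightarrow> complex)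
    \<Rightarrow> (nat \<Rightarrow> nat \<Rightarrow> complex)" where
  "tensor_op m A B = (\<lambda>i j. A (i div m) (j div m) * B (i mod m) (j mod m))"

definition proj :: "(nat \<Rightarrow> complex) \<Rightarrow> (nat \<Rightarrow> nat \<Rightarrow> complex)" where
  "proj v = (\<lambda>i j. v i * cnj (v j))"

definition psd :: "nat \<Rightarrow> (nat \<Rightarrow> nat \<Rightarrow> complex) \<Rightarrow> bool" where
  "psd n A \<longleftrightarrow> (\<forall>v. Im (\<Sum>i<n. \<Sum>j<n. cnj (v i) * A i j * v j) = 0
                   \<and> 0 \<le> Re (\<Sum>i<n. \<Sum>j<n. cnj (v i) * A i j * v j))"

definition trace_op :: "nat \<Rightarrow> (nat \<Rightarrow> nat \<Rightarrow> complex) \<Rightarrow> complex" where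
  "trace_op n A = (\<Sum>i<n. A i i)"

text \<open>A linear map from operators on C^n1 to operators on C^n2 is given by its coefficient
array S: (F A)_{a b} = sum_{i,j<n1} S a b i j * A_{i j}. Every linear map has this form.\<close>
definition apply_map :: "nat \<Rightarrow> (nat \<Rightarrow> nat \<Rightarrow> nat \<Rightarrow> nat \<Rightarrow> complex)
    \<Rightarrow> (nat \<Rightarrow> nat \<Rightarrow> complex) \<Rightarrow> (nat \<Rightarrow> nat \<Rightarrow> complex)" where
  "apply_map n1 S A = (\<lambda>a b. \<Sum>i<n1. \<Sum>j<n1. S a b i j * A i j)"

text \<open>F (x) id_k applied to an operator on C^n1 (x) C^k.\<close>
definition apply_map_ext :: "nat \<Rightarrow> nat \<Rightarrow> (nat \<Rightarrow> nat \<Rightarrow> nat \<Rightarrow> nat \<Rightarrow> complex)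
    \<Rightarrow> (nat \<Rightarrow> nat \<Rightarrow> complex) \<Rightarrow> (nat \<Rightarrow> nat \<Rightarrow> complex)" where
  "apply_map_ext n1 k S X = (\<lambda>r s. \<Sum>i<n1. \<Sum>j<n1.
        S (r div k) (s div k) i j * X (i * k + r mod k) (j * k + s mod k))"

definition completely_positive :: "nat \<Rightarrow> nat \<Rightarrow> (nat \<Rightarrow> nat \<Rightarrow> nat \<Rightarrow> nat \<Rightarrow> complex) \<Rightarrow> bool" where
  "completely_positive n1 n2 S \<longleftrightarrow>
     (\<forall>k X. k \<ge> 1 \<longrightarrow> psd (n1 * k) X \<longrightarrow> psd (n2 * k) (apply_map_ext n1 k S X))"

definition trace_nonincreasing :: "nat \<Rightarrow> nat \<Rightarrow> (nat \<Rightarrow> nat \<Rightarrow> nat \<Rightarrow> nat \<Rightarrow> complex) \<Rightarrow> bool" where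
  "trace_nonincreasing n1 n2 S \<longleftrightarrow>
     (\<forall>A. psd n1 A \<longrightarrow> Re (trace_op n2 (apply_map n1 S A)) \<le> Re (trace_op n1 A))"

definition prob_qtrans :: "nat \<Rightarrow> nat \<Rightarrow> (nat \<Rightarrow> nat \<Rightarrow> nat \<Rightarrow> nat \<Rightarrow> complex) \<Rightarrow> bool" where
  "prob_qtrans n1 n2 S \<longleftrightarrow> completely_positive n1 n2 S \<and> trace_nonincreasing n1 n2 S"

definition qubit :: "complex \<Rightarrow> complex \<Rightarrow> (nat \<Rightarrow> complex)" where
  "qubit a b = (\<lambda>i. if i = 0 then a else if i = 1 then b else 0)"

end

theory Submission
  imports Defs
begin

(* The map is A |-> K A K^* for a single Kraus operator K : C^2 (x) H^(x)4 -> H with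
   K |0>|x1 x2 x3 x4> = g0 <X|x3 x4 x1> |x2>  and  K |1>|x1 x2 x3 x4> = g1 <X|x1 x2 x3> |x4>.
   On |mu>|psi psi phi phi> it yields g0 alpha <X|phi phi psi> |psi> + g1 beta <X|psi psi phi> |phi>.
   The two overlaps have moduli sqrt c2 and sqrt c1, so g0 = t / sqrt c2 and g1 = t / sqrt c1 make
   this t (alpha e^(i theta3) |psi> + beta e^(i theta4) |phi>). A map with a single Kraus operator is
   completely positive, and as the entries of K are bounded it does not increase traces once t > 0 is
   small enough. *)

lemma sum_lessThan_mult:
  fixes a b :: nat
  shows "(\<Sum>r<a * b. f r) = (\<Sum>i<a. \<Sum>j<b. f (i * b + j))"
proof -
  have "(\<Sum>r<a * b. f r) = (\<Sum>i<a. \<Sum>r\<in>{i * b..<i * b + b}. f r)"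
    by (rule sum.nat_group[symmetric])
  also have "\<dots> = (\<Sum>i<a. \<Sum>j<b. f (i * b + j))"
    by (simp add: sum.atLeastLessThan_shift_0 atLeast0LessThan)
  finally show ?thesis .
qed

lemma sum_lessThan_mult_mod_eq:
  fixes k :: nat
  assumes "t < k"
  shows "(\<Sum>m<n * k. if m mod k = t then g (m div k) m else 0) = (\<Sum>i<n. g i (i * k + t))"
  using assms by (simp add: sum_lessThan_mult)

definition quad_form :: "nat \<Rightarrow> (nat \<Rightarrow> nat \<Rightarrow> complex) \<Rightarrow> (nat \<Rightarrow> complex) \<Rightarrow> complex" where
  "quad_form n A v = (\<Sum>i<n. \<Sum>j<n. cnj (v i) * A i j * v j)"

lemma psd_iff_quad_form: "psd n A \<longleftrightarrow> (\<forall>v. Im (quad_form n A v) = 0 \<and> 0 \<le> Re (quad_form n A v))"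
  unfolding psd_def quad_form_def ..

lemma quad_form_cong: "(\<And>i. i < n \<Longrightarrow> u i = v i) \<Longrightarrow> quad_form n A u = quad_form n A v"
  unfolding quad_form_def by simp

lemma quad_form_parallelogram:
  "quad_form n A (\<lambda>i. u i + v i) + quad_form n A (\<lambda>i. u i - v i) = 2 * quad_form n A u + 2 * quad_form n A v"
  unfolding quad_form_def by (simp add: sum.distrib[symmetric] sum_distrib_left algebra_simps)

lemma quad_form_basis_vector:
  assumes "m < n"
  shows "quad_form n A (\<lambda>i. if i = m then c else 0) = cnj c * A m m * c"
  using assms unfolding quad_form_def
  by (simp add: if_distrib[of cnj] if_distrib[of "\<lambda>x. x * _"] if_distrib[of "\<lambda>x. _ * x"]
      sum.If_cases Int_absorb1 cong: if_cong)

lemma psd_diag_nonneg: "psd n A \<Longrightarrow> m < n \<Longrightarrow> 0 \<le> Re (A m m)"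
  using quad_form_basis_vector[of m n A 1] by (simp add: psd_iff_quad_form) metis

lemma psd_quad_form_add_le:
  assumes "psd n A"
  shows "Re (quad_form n A (\<lambda>i. u i + v i)) \<le> 2 * Re (quad_form n A u) + 2 * Re (quad_form n A v)"
proof -
  have "0 \<le> Re (quad_form n A (\<lambda>i. u i - v i))"
    using assms by (simp add: psd_iff_quad_form)
  then show ?thesis
    using arg_cong[OF quad_form_parallelogram[of n A u v], of Re] by simp
qed

lemma quad_form_congruence:
  "quad_form N (\<lambda>r s. \<Sum>m<M. \<Sum>m'<M. L r m * Y m m' * cnj (L s m')) v
     = quad_form M Y (\<lambda>m. \<Sum>r<N. cnj (L r m) * v r)"
  unfolding quad_form_def
  by (simp add: sum_distrib_left sum_distrib_right mult_ac sum.swap[where A="{..<N}" and B="{..<M}"])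

(* The factor 2^n is far from sharp, but any bound will do: the Kraus operator can be scaled down. *)
lemma psd_quad_form_le_trace:
  assumes psd: "psd n A" and bound: "\<And>i. i < n \<Longrightarrow> (cmod (w i))\<^sup>2 \<le> B"
  shows "Re (quad_form n A w) \<le> 2 ^ n * B * Re (trace_op n A)"
proof -
  have "Re (quad_form n A (\<lambda>i. if i < m then w i else 0)) \<le> 2 ^ m * B * (\<Sum>i<m. Re (A i i))"
    if "m \<le> n" for m
    using that
  proof (induction m)
    case 0
    then show ?case by (simp add: quad_form_def)
  next
    case (Suc m)
    have "m < n" using Suc.prems by simp
    have diag: "0 \<le> B * Re (A m m)"
      using bound[OF \<open>m < n\<close>] psd_diag_nonneg[OF psd \<open>m < n\<close>] by (simp add: order_trans[OF zero_le_power2])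
    have "quad_form n A (\<lambda>i. if i = m then w m else 0) = of_real ((cmod (w m))\<^sup>2) * A m m"
      using quad_form_basis_vector[OF \<open>m < n\<close>, of A "w m"] by (simp add: complex_norm_square[symmetric] mult_ac)
    then have "Re (quad_form n A (\<lambda>i. if i = m then w m else 0)) = (cmod (w m))\<^sup>2 * Re (A m m)"
      by simp
    also have "\<dots> \<le> B * Re (A m m)"
      using bound[OF \<open>m < n\<close>] psd_diag_nonneg[OF psd \<open>m < n\<close>] by (rule mult_right_mono)
    finally have basis_term: "Re (quad_form n A (\<lambda>i. if i = m then w m else 0)) \<le> B * Re (A m m)" .
    have "(\<lambda>i. if i < Suc m then w i else 0) = (\<lambda>i. (if i < m then w i else 0) + (if i = m then w m else 0))"
      by auto
    then have "Re (quad_form n A (\<lambda>i. if i < Suc m then w i else 0))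
        \<le> 2 * Re (quad_form n A (\<lambda>i. if i < m then w i else 0)) + 2 * Re (quad_form n A (\<lambda>i. if i = m then w m else 0))"
      using psd_quad_form_add_le[OF psd] by simp
    also have "\<dots> \<le> 2 * (2 ^ m * B * (\<Sum>i<m. Re (A i i))) + 2 * (B * Re (A m m))"
      using Suc.IH \<open>m < n\<close> basis_term by simp
    also have "\<dots> \<le> 2 ^ Suc m * B * (\<Sum>i<Suc m. Re (A i i))"
      using mult_right_mono[OF one_le_power[of 2 m] diag] by (simp add: algebra_simps)
    finally show ?case .
  qed
  from this[of n] show ?thesis
    by (simp add: trace_op_def quad_form_cong[of n w "\<lambda>i. if i < n then w i else 0"])
qed

(* The coefficient array, in the sense of apply_map, of A |-> K A K^*. *)
definition sandwich :: "(nat \<Rightarrow> nat \<Rightarrow> complex) \<Rightarrow> nat \<Rightarrow> nat \<Rightarrow> nat \<Rightarrow> nat \<Rightarrow> complex" where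
  "sandwich K = (\<lambda>a b i j. K a i * cnj (K b j))"

lemma apply_map_sandwich_proj:
  "apply_map n (sandwich K) (proj v) a b = (\<Sum>i<n. K a i * v i) * cnj (\<Sum>j<n. K b j * v j)"
  unfolding apply_map_def sandwich_def proj_def
  by (simp add: sum_distrib_left sum_distrib_right mult_ac) (rule sum.swap)

(* L is the Kronecker product of K with the identity of C^k. *)
lemma apply_map_ext_sandwich:
  fixes K :: "nat \<Rightarrow> nat \<Rightarrow> complex"
  assumes "k \<ge> 1"
  defines "L \<equiv> \<lambda>r m. if m mod k = r mod k then K (r div k) (m div k) else 0"
  shows "apply_map_ext n k (sandwich K) Y r s
    = (\<Sum>m<n * k. \<Sum>m'<n * k. L r m * Y m m' * cnj (L s m'))"
proof -
  have mod_k: "r mod k < k" "s mod k < k"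
    using assms(1) by simp_all
  have "(\<Sum>m'<n * k. x * Y m m' * cnj (L s m')) = (\<Sum>j<n. x * Y m (j * k + s mod k) * cnj (K (s div k) j))"
    for x m
  proof -
    have "(\<Sum>m'<n * k. x * Y m m' * cnj (L s m'))
        = (\<Sum>m'<n * k. if m' mod k = s mod k then x * Y m m' * cnj (K (s div k) (m' div k)) else 0)"
      by (rule sum.cong) (simp_all add: L_def)
    also have "\<dots> = (\<Sum>j<n. x * Y m (j * k + s mod k) * cnj (K (s div k) j))"
      using mod_k(2) by (rule sum_lessThan_mult_mod_eq)
    finally show ?thesis .
  qed
  then have "(\<Sum>m<n * k. \<Sum>m'<n * k. L r m * Y m m' * cnj (L s m'))
      = (\<Sum>m<n * k. if m mod k = r mod k
           then \<Sum>j<n. K (r div k) (m div k) * Y m (j * k + s mod k) * cnj (K (s div k) j) else 0)"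
    by (intro sum.cong) (simp_all add: L_def)
  also have "\<dots> = (\<Sum>i<n. \<Sum>j<n. K (r div k) i * Y (i * k + r mod k) (j * k + s mod k) * cnj (K (s div k) j))"
    using mod_k(1) by (rule sum_lessThan_mult_mod_eq)
  finally show ?thesis
    unfolding apply_map_ext_def sandwich_def by (simp add: mult_ac)
qed

lemma completely_positive_sandwich: "completely_positive n1 n2 (sandwich K)"
  unfolding completely_positive_def
proof (intro allI impI)
  fix k Y
  assume k: "k \<ge> 1" and psd: "psd (n1 * k) Y"
  let ?L = "\<lambda>r m. if m mod k = r mod k then K (r div k) (m div k) else 0"
  have "quad_form (n2 * k) (apply_map_ext n1 k (sandwich K) Y) v
      = quad_form (n1 * k) Y (\<lambda>m. \<Sum>r<n2 * k. cnj (?L r m) * v r)" for v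
    unfolding apply_map_ext_sandwich[OF k] by (rule quad_form_congruence)
  with psd show "psd (n2 * k) (apply_map_ext n1 k (sandwich K) Y)"
    by (simp add: psd_iff_quad_form)
qed

lemma trace_apply_map_sandwich:
  "trace_op d (apply_map n (sandwich K) A) = (\<Sum>a<d. quad_form n A (\<lambda>i. cnj (K a i)))"
  unfolding trace_op_def apply_map_def sandwich_def quad_form_def by (simp add: mult_ac)

lemma trace_nonincreasing_sandwich:
  assumes bound: "\<And>a i. a < d \<Longrightarrow> i < n \<Longrightarrow> (cmod (K a i))\<^sup>2 \<le> B"
    and small: "real d * 2 ^ n * B \<le> 1"
  shows "trace_nonincreasing n d (sandwich K)"
  unfolding trace_nonincreasing_def
proof (intro allI impI)
  fix A
  assume psd: "psd n A"
  have "Re (trace_op d (apply_map n (sandwich K) A)) = (\<Sum>a<d. Re (quad_form n A (\<lambda>i. cnj (K a i))))"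
    by (simp add: trace_apply_map_sandwich)
  also have "\<dots> \<le> (\<Sum>a<d. 2 ^ n * B * Re (trace_op n A))"
    using bound by (intro sum_mono psd_quad_form_le_trace[OF psd]) simp
  also have "\<dots> = (real d * 2 ^ n * B) * Re (trace_op n A)"
    by simp
  also have "\<dots> \<le> 1 * Re (trace_op n A)"
    using psd_diag_nonneg[OF psd]
    by (intro mult_right_mono[OF small]) (auto simp: trace_op_def intro: sum_nonneg)
  finally show "Re (trace_op d (apply_map n (sandwich K) A)) \<le> Re (trace_op n A)"
    by simp
qed

lemma index_less_power:
  fixes d :: nat
  assumes "x < d" "r < d ^ k"
  shows "x * d ^ k + r < d ^ Suc k"
proof -
  have "x * d ^ k + r < (x + 1) * d ^ k" using assms(2) by simp
  also have "\<dots> \<le> d * d ^ k" using assms(1) by (intro mult_right_mono) simp_all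
  finally show ?thesis by simp
qed

lemma index_less_power2: "y < d \<Longrightarrow> z < d \<Longrightarrow> y * d + z < (d::nat)\<^sup>2"
  using index_less_power[of y d z 1] by (simp add: power2_eq_square)

lemma index_less_power3: "x < d \<Longrightarrow> y < d \<Longrightarrow> z < d \<Longrightarrow> x * d\<^sup>2 + (y * d + z) < (d::nat) ^ 3"
  using index_less_power[of x d "y * d + z" 2] index_less_power2 by (simp add: numeral_3_eq_3)

lemma index_less_power4:
  "w < d \<Longrightarrow> x < d \<Longrightarrow> y < d \<Longrightarrow> z < d \<Longrightarrow> w * d ^ 3 + (x * d\<^sup>2 + (y * d + z)) < (d::nat) ^ 4"
  using index_less_power[of w d "x * d\<^sup>2 + (y * d + z)" 3] index_less_power3 by (simp add: eval_nat_numeral)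

lemma digit_less:
  fixes d :: nat
  assumes "0 < d"
  shows "I mod d ^ Suc k div d ^ k < d"
  using assms by (simp add: less_mult_imp_div_less)

lemma sum_lessThan_power_Suc:
  fixes d :: nat
  shows "(\<Sum>r<d ^ Suc k. f r) = (\<Sum>x<d. \<Sum>r<d ^ k. f (x * d ^ k + r))"
  by (simp add: sum_lessThan_mult)

lemma sum_lessThan_power3:
  fixes d :: nat
  shows "(\<Sum>r<d ^ 3. f r) = (\<Sum>x<d. \<Sum>y<d. \<Sum>z<d. f (x * d\<^sup>2 + (y * d + z)))"
  using sum_lessThan_power_Suc[of f d 2] by (simp add: numeral_3_eq_3 power2_eq_square sum_lessThan_mult)

lemma sum_lessThan_power4:
  fixes d :: nat
  shows "(\<Sum>r<d ^ 4. f r) = (\<Sum>w<d. \<Sum>x<d. \<Sum>y<d. \<Sum>z<d. f (w * d ^ 3 + (x * d\<^sup>2 + (y * d + z))))"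
proof -
  have "(\<Sum>r<d ^ 4. f r) = (\<Sum>w<d. \<Sum>r<d ^ 3. f (w * d ^ 3 + r))"
    using sum_lessThan_power_Suc[of f d 3] by (simp add: numeral_Bit0 numeral_3_eq_3)
  then show ?thesis
    by (simp add: sum_lessThan_power3)
qed

lemma tensor_vec_index: "r < m \<Longrightarrow> tensor_vec m v w (i * m + r) = v i * w r"
  by (simp add: tensor_vec_def)

lemma tensor_op_proj: "tensor_op m (proj u) (proj w) = proj (tensor_vec m u w)"
  unfolding tensor_op_def proj_def tensor_vec_def by (simp add: fun_eq_iff mult_ac)

lemma cinner_tensor_vec3:
  "cinner (d ^ 3) X (tensor_vec (d\<^sup>2) u (tensor_vec d v w))
     = (\<Sum>x<d. \<Sum>y<d. \<Sum>z<d. cnj (X (x * d\<^sup>2 + (y * d + z))) * (u x * (v y * w z)))"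
  unfolding cinner_def sum_lessThan_power3
  by (intro sum.cong refl) (simp add: tensor_vec_index index_less_power2)

lemma unit_vec_entry_bound:
  assumes "unit_vec n X" "i < n"
  shows "(cmod (X i))\<^sup>2 \<le> 1"
proof -
  have "Re (cinner n X X) = (\<Sum>j<n. (cmod (X j))\<^sup>2)"
    unfolding cinner_def by (simp add: cmod_power2 flip: power2_eq_square)
  moreover have "Re (cinner n X X) = 1"
    using assms(1) unfolding unit_vec_def vnorm_def by (metis real_sqrt_eq_1_iff)
  moreover have "(cmod (X i))\<^sup>2 \<le> (\<Sum>j<n. (cmod (X j))\<^sup>2)"
    using assms(2) by (intro member_le_sum) auto
  ultimately show ?thesis by simp
qed

(* Entry (a, I) of the Kraus operator, where I = q d^4 + x1 d^3 + x2 d^2 + x3 d + x4 encodes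
   the basis vector |q>|x1 x2 x3 x4>. *)
definition superposition_kraus ::
    "nat \<Rightarrow> (nat \<Rightarrow> complex) \<Rightarrow> complex \<Rightarrow> complex \<Rightarrow> nat \<Rightarrow> nat \<Rightarrow> complex" where
  "superposition_kraus d X g0 g1 a I =
    (let q = I div d ^ 4; J = I mod d ^ 4; x1 = J div d ^ 3; R1 = J mod d ^ 3;
         x2 = R1 div d\<^sup>2; R2 = R1 mod d\<^sup>2; x3 = R2 div d; x4 = R2 mod d in
     if q = 0 then (if x2 = a then g0 * cnj (X (x3 * d\<^sup>2 + (x4 * d + x1))) else 0)
     else if q = 1 then (if x4 = a then g1 * cnj (X (x1 * d\<^sup>2 + (x2 * d + x3))) else 0)
     else 0)"

lemma superposition_kraus_entry_bound:
  assumes X: "unit_vec (d ^ 3) X"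
  shows "(cmod (superposition_kraus d X g0 g1 a I))\<^sup>2 \<le> (cmod g0)\<^sup>2 + (cmod g1)\<^sup>2"
proof -
  have "d > 0"
    using X by (cases d) (simp_all add: unit_vec_def vnorm_def cinner_def)
  then have digits: "I mod d ^ 4 div d ^ 3 < d" "I mod d ^ 4 mod d ^ 3 div d\<^sup>2 < d"
      "I mod d ^ 4 mod d ^ 3 mod d\<^sup>2 div d < d" "I mod d ^ 4 mod d ^ 3 mod d\<^sup>2 mod d < d"
    using digit_less[of d _ 3] digit_less[of d _ 2] digit_less[of d _ 1]
    by (simp_all add: numeral_Bit0 numeral_3_eq_3 power2_eq_square)
  have entry: "(cmod (g * cnj (X (x * d\<^sup>2 + (y * d + z)))))\<^sup>2 \<le> (cmod g)\<^sup>2"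
    if "x < d" "y < d" "z < d" for g x y z
    using unit_vec_entry_bound[OF X index_less_power3[OF that]]
    by (simp add: norm_mult power_mult_distrib mult_left_le)
  show ?thesis
    unfolding superposition_kraus_def Let_def
    using entry[OF digits(3,4,1), of g0] entry[OF digits(1,2,3), of g1]
    by (simp add: add_increasing add_increasing2)
qed

lemma sum_if_const: "(\<Sum>x\<in>A. if c then f x else 0) = (if c then sum f A else 0)"
  by simp

lemma superposition_kraus_apply:
  fixes d :: nat and X \<psi> \<phi> :: "nat \<Rightarrow> complex" and g0 g1 :: complex
  assumes a: "a < d"
  defines "K \<equiv> superposition_kraus d X g0 g1 a"
    and "W \<equiv> tensor_vec (d ^ 3) \<psi> (tensor_vec (d\<^sup>2) \<psi> (tensor_vec d \<phi> \<phi>))"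
  shows "(\<Sum>I<2 * d ^ 4. K I * tensor_vec (d ^ 4) (qubit \<alpha> \<beta>) W I)
    = g0 * \<alpha> * \<psi> a * cinner (d ^ 3) X (tensor_vec (d\<^sup>2) \<phi> (tensor_vec d \<phi> \<psi>))
      + g1 * \<beta> * \<phi> a * cinner (d ^ 3) X (tensor_vec (d\<^sup>2) \<psi> (tensor_vec d \<psi> \<phi>))"
proof -
  have "(\<Sum>I<2 * d ^ 4. K I * tensor_vec (d ^ 4) (qubit \<alpha> \<beta>) W I)
      = (\<Sum>J<d ^ 4. K J * (\<alpha> * W J)) + (\<Sum>J<d ^ 4. K (d ^ 4 + J) * (\<beta> * W J))"
    unfolding sum_lessThan_mult[where a=2 and b="d ^ 4"] by (simp add: tensor_vec_index numeral_2_eq_2 qubit_def)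
  also have "(\<Sum>J<d ^ 4. K J * (\<alpha> * W J))
      = (\<Sum>x1<d. \<Sum>x2<d. \<Sum>x3<d. \<Sum>x4<d. if x2 = a
           then g0 * cnj (X (x3 * d\<^sup>2 + (x4 * d + x1))) * (\<alpha> * (\<psi> x1 * (\<psi> x2 * (\<phi> x3 * \<phi> x4)))) else 0)"
    unfolding sum_lessThan_power4
    by (intro sum.cong refl)
      (simp add: K_def W_def superposition_kraus_def tensor_vec_index index_less_power2 index_less_power3 index_less_power4)
  also have "\<dots> = (\<Sum>x1<d. \<Sum>x3<d. \<Sum>x4<d.
      g0 * cnj (X (x3 * d\<^sup>2 + (x4 * d + x1))) * (\<alpha> * (\<psi> x1 * (\<psi> a * (\<phi> x3 * \<phi> x4)))))"
    using a by (simp add: sum_if_const)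
  also have "\<dots> = (\<Sum>x3<d. \<Sum>x4<d. \<Sum>x1<d.
      g0 * cnj (X (x3 * d\<^sup>2 + (x4 * d + x1))) * (\<alpha> * (\<psi> x1 * (\<psi> a * (\<phi> x3 * \<phi> x4)))))"
    by (subst sum.swap, rule sum.cong[OF refl], rule sum.swap)
  also have "\<dots> = g0 * \<alpha> * \<psi> a * cinner (d ^ 3) X (tensor_vec (d\<^sup>2) \<phi> (tensor_vec d \<phi> \<psi>))"
    unfolding cinner_tensor_vec3 by (simp add: sum_distrib_left mult_ac)
  also have "(\<Sum>J<d ^ 4. K (d ^ 4 + J) * (\<beta> * W J))
      = (\<Sum>x1<d. \<Sum>x2<d. \<Sum>x3<d. \<Sum>x4<d. if x4 = a
           then g1 * cnj (X (x1 * d\<^sup>2 + (x2 * d + x3))) * (\<beta> * (\<psi> x1 * (\<psi> x2 * (\<phi> x3 * \<phi> x4)))) else 0)"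
    unfolding sum_lessThan_power4
    by (intro sum.cong refl)
      (simp add: K_def W_def superposition_kraus_def tensor_vec_index index_less_power2 index_less_power3 index_less_power4)
  also have "\<dots> = g1 * \<beta> * \<phi> a * cinner (d ^ 3) X (tensor_vec (d\<^sup>2) \<psi> (tensor_vec d \<psi> \<phi>))"
    unfolding cinner_tensor_vec3 using a by (simp add: sum_distrib_left mult_ac)
  finally show ?thesis .
qed

lemma apply_map_sandwich_proj_normalized:
  assumes K: "\<And>a. a < d \<Longrightarrow> (\<Sum>i<n. K a i * v i) = of_real t * \<chi> a"
    and "t \<noteq> 0" and "vnorm d \<chi> \<noteq> 0"
  shows "\<exists>p>0. \<forall>a<d. \<forall>b<d.
    apply_map n (sandwich K) (proj v) a b = of_real p * proj (\<lambda>i. \<chi> i / of_real (vnorm d \<chi>)) a b"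
proof (intro exI[of _ "t\<^sup>2 * (vnorm d \<chi>)\<^sup>2"] conjI allI impI)
  show "0 < t\<^sup>2 * (vnorm d \<chi>)\<^sup>2"
    using assms(2,3) by simp
  fix a b
  assume "a < d" "b < d"
  show "apply_map n (sandwich K) (proj v) a b
      = of_real (t\<^sup>2 * (vnorm d \<chi>)\<^sup>2) * proj (\<lambda>i. \<chi> i / of_real (vnorm d \<chi>)) a b"
    using assms(3) unfolding apply_map_sandwich_proj K[OF \<open>a < d\<close>] K[OF \<open>b < d\<close>]
    by (simp add: proj_def field_simps power2_eq_square)
qed

lemma prob_qtrans_superposition_kraus:
  assumes "unit_vec (d ^ 3) X" and "real d * 2 ^ (2 * d ^ 4) * ((cmod g0)\<^sup>2 + (cmod g1)\<^sup>2) \<le> 1"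
  shows "prob_qtrans (2 * d ^ 4) d (sandwich (superposition_kraus d X g0 g1))"
  unfolding prob_qtrans_def
  by (intro conjI completely_positive_sandwich trace_nonincreasing_sandwich[OF _ assms(2)]
      superposition_kraus_entry_bound[OF assms(1)])

theorem theorem8:
  fixes d :: nat and X :: "nat \<Rightarrow> complex" and c1 c2 :: real
  assumes "d \<ge> 2"
    and "unit_vec (d^3) X"
    and "c1 > 0" and "c2 > 0"
  shows "\<exists>S. prob_qtrans (2 * d^4) d S \<and>
    (\<forall>\<alpha> \<beta> \<psi> \<phi>.
       \<alpha> \<noteq> 0 \<longrightarrow> \<beta> \<noteq> 0 \<longrightarrow> (cmod \<alpha>)\<^sup>2 + (cmod \<beta>)\<^sup>2 = 1 \<longrightarrow>
       unit_vec d \<psi> \<longrightarrow> unit_vec d \<phi> \<longrightarrow>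
       (cmod (cinner (d^3) X (tensor_vec (d^2) \<psi> (tensor_vec d \<psi> \<phi>))))\<^sup>2 = c1 \<longrightarrow>
       (cmod (cinner (d^3) X (tensor_vec (d^2) \<phi> (tensor_vec d \<phi> \<psi>))))\<^sup>2 = c2 \<longrightarrow>
       (let z4 = cinner (d^3) X (tensor_vec (d^2) \<psi> (tensor_vec d \<psi> \<phi>));
            z3 = cinner (d^3) X (tensor_vec (d^2) \<phi> (tensor_vec d \<phi> \<psi>));
            e3 = z3 / complex_of_real (cmod z3);
            e4 = z4 / complex_of_real (cmod z4);
            \<chi> = (\<lambda>i. \<alpha> * e3 * \<psi> i + \<beta> * e4 * \<phi> i);
            \<phi>' = (\<lambda>i. \<chi> i / complex_of_real (vnorm d \<chi>));
            \<rho> = tensor_op (d^4) (proj (qubit \<alpha> \<beta>))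
                   (tensor_op (d^3) (proj \<psi>) (tensor_op (d^2) (proj \<psi>)
                     (tensor_op d (proj \<phi>) (proj \<phi>))))
        in vnorm d \<chi> \<noteq> 0 \<longrightarrow>
           (\<exists>p > 0. \<forall>a<d. \<forall>b<d.
              apply_map (2 * d^4) S \<rho> a b = complex_of_real p * proj \<phi>' a b)))"
proof -
  define C :: real where "C = real d * 2 ^ (2 * d ^ 4) * (1 / c1 + 1 / c2)"
  define t :: real where "t = 1 / sqrt C"
  have "C > 0"
    using assms(1,3,4) unfolding C_def by (intro mult_pos_pos add_pos_pos) auto
  then have t: "t > 0" "t\<^sup>2 * C = 1"
    by (simp_all add: t_def power_divide)
  define K where "K = superposition_kraus d X (of_real (t / sqrt c2)) (of_real (t / sqrt c1))"
  have "real d * 2 ^ (2 * d ^ 4) * ((cmod (of_real (t / sqrt c2)))\<^sup>2 + (cmod (of_real (t / sqrt c1)))\<^sup>2) = t\<^sup>2 * C"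
    using assms(3,4) unfolding norm_of_real power2_abs by (simp add: C_def power_divide field_simps)
  then have "prob_qtrans (2 * d ^ 4) d (sandwich K)"
    unfolding K_def using t(2) assms(2) by (intro prob_qtrans_superposition_kraus) simp_all
  moreover have "\<exists>p>0. \<forall>a<d. \<forall>b<d. apply_map (2 * d ^ 4) (sandwich K)
        (proj (tensor_vec (d ^ 4) (qubit \<alpha> \<beta>) (tensor_vec (d ^ 3) \<psi> (tensor_vec (d\<^sup>2) \<psi> (tensor_vec d \<phi> \<phi>))))) a b
      = of_real p * proj (\<lambda>i. \<chi> i / of_real (vnorm d \<chi>)) a b"
    if "cmod z4 = sqrt c1" "cmod z3 = sqrt c2" "vnorm d \<chi> \<noteq> 0"
      and "z4 = cinner (d ^ 3) X (tensor_vec (d\<^sup>2) \<psi> (tensor_vec d \<psi> \<phi>))"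
      and "z3 = cinner (d ^ 3) X (tensor_vec (d\<^sup>2) \<phi> (tensor_vec d \<phi> \<psi>))"
      and "\<chi> = (\<lambda>i. \<alpha> * (z3 / of_real (cmod z3)) * \<psi> i + \<beta> * (z4 / of_real (cmod z4)) * \<phi> i)"
    for \<alpha> \<beta> \<psi> \<phi> z3 z4 \<chi>
    using that t(1) assms(3,4)
    by (intro apply_map_sandwich_proj_normalized[where t = t])
      (simp_all add: K_def superposition_kraus_apply field_simps)
  ultimately show ?thesis
    unfolding Let_def by (auto simp: tensor_op_proj real_sqrt_unique)
qed

end
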